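(* Assume that $d_k^2 < 2p_{k+1}$ for every $k\geq 1$. Then for every integer $N\geq 1$ there is a prime $p$ with $N^2 < p < (N+1)^2$.
   Context: $p_k$ denotes the $k$th prime ($p_1=2$) and $d_k := p_{k+1}-p_k$. *)

theory Defs
  imports Main "HOL-Computational_Algebra.Primes" "HOL-Library.Infinite_Set"
begin

text \<open>p k is the k-th prime, 1-based: p 1 = 2. enumerate S 0 is the least element of S.\<close>
definition p :: "nat \<Rightarrow> nat" where
  "p k = enumerate {q::nat. prime q} (k - 1)"

definition d :: "nat \<Rightarrow> nat" where
  "d k = p (k + 1) - p k"

end

theory Submission
  imports Defs
begin

text \<open>If no prime lay strictly between \<open>N\<^sup>2\<close> and \<open>(N + 1)\<^sup>2\<close>, then, squares not being
  prime, some consecutive primes would satisfy \<open>p k < N\<^sup>2\<close> and \<open>p (k + 1) > (N + 1)\<^sup>2\<close>, so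
  \<open>d k \<ge> 2 N + 3\<close>. But the hypothesis gives \<open>d k\<^sup>2 < 2 p (k + 1) = 2 (p k + d k) < 2 N\<^sup>2 + 2 d k\<close>,
  which forces \<open>d k \<le> 2 N + 2\<close>.\<close>

lemma infinite_primes: "infinite {q::nat. prime q}"
  using primes_infinite by simp

lemma prime_p: "prime (p k)"
  unfolding p_def using enumerate_in_set[OF infinite_primes] by auto

lemma p_less_p_Suc: "1 \<le> k \<Longrightarrow> p k < p (k + 1)"
  unfolding p_def using strict_mono_enumerate[OF infinite_primes]
  by (simp add: strict_mono_def)

lemma prime_eq_p:
  assumes "prime q"
  obtains k where "1 \<le> k" "p k = q"
proof -
  have "q \<in> range (enumerate {q::nat. prime q})"
    using assms range_enumerate[OF infinite_primes] by auto
  then obtain i where "enumerate {q::nat. prime q} i = q" by auto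
  then show ?thesis using that[of "i + 1"] by (simp add: p_def)
qed

lemma not_prime_square: "\<not> prime ((n::nat)^2)"
  by (simp add: prime_power_iff)

lemma consecutive_primes_across_gap:
  assumes "2 \<le> a" and no_prime: "\<And>q. prime q \<Longrightarrow> a < q \<Longrightarrow> b \<le> q"
  obtains k where "1 \<le> k" "p k \<le> a" "b \<le> p (k + 1)"
proof -
  define S where "S = {q::nat. prime q \<and> q \<le> a}"
  have "finite S" "2 \<in> S"
    using \<open>2 \<le> a\<close> by (auto simp: S_def)
  then have "Max S \<in> S" and Max_ge: "\<And>q. q \<in> S \<Longrightarrow> q \<le> Max S"
    by (auto intro: Max_in)
  then obtain k where k: "1 \<le> k" "p k = Max S"
    using prime_eq_p by (auto simp: S_def)
  have "a < p (k + 1)"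
  proof (rule ccontr)
    assume "\<not> a < p (k + 1)"
    then have "p (k + 1) \<le> p k"
      using Max_ge[of "p (k + 1)"] prime_p k(2) by (auto simp: S_def)
    with p_less_p_Suc[OF k(1)] show False by simp
  qed
  then have "b \<le> p (k + 1)"
    using no_prime prime_p by blast
  moreover have "p k \<le> a"
    using \<open>Max S \<in> S\<close> k(2) by (simp add: S_def)
  ultimately show ?thesis
    using that k(1) by blast
qed

lemma gap_bound_of_square_bound:
  fixes D P N :: nat
  assumes "D^2 < 2 * (P + D)" and "P < N^2"
  shows "D \<le> 2 * N + 2"
proof (rule ccontr)
  assume "\<not> D \<le> 2 * N + 2"
  then have "2 * N + 3 \<le> D" by simp
  then have "(2 * N + 1) * (2 * N + 3) \<le> (2 * N + 1) * D"
    by (rule mult_le_mono2)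
  moreover have "(2 * N + 3) * D \<le> D * D"
    using \<open>2 * N + 3 \<le> D\<close> by (rule mult_le_mono1)
  ultimately show False
    using assms by (simp add: power2_eq_square algebra_simps)
qed

lemma large_gap_across_prime_free_square_interval:
  assumes "2 \<le> N" and no_prime: "\<nexists>q. prime q \<and> N^2 < q \<and> q < (N + 1)^2"
  obtains k where "1 \<le> k" "p k < N^2" "2 * N + 3 \<le> d k"
proof -
  have "2 \<le> N^2"
    using \<open>2 \<le> N\<close> by (simp add: power2_eq_square order_trans[OF _ le_square])
  moreover have "(N + 1)^2 + 1 \<le> q" if "prime q" "N^2 < q" for q
    using that no_prime not_prime_square[of "N + 1"]
    by (cases "q = (N + 1)^2") (auto simp: not_less)
  ultimately obtain k where k: "1 \<le> k" "p k \<le> N^2" "(N + 1)^2 + 1 \<le> p (k + 1)"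
    using consecutive_primes_across_gap by blast
  have "p k < N^2"
    using k(2) prime_p[of k] not_prime_square[of N] by (metis le_neq_implies_less)
  moreover have "(N + 1)^2 = N^2 + 2 * N + 1"
    by algebra
  ultimately have "2 * N + 3 \<le> d k"
    using k(3) by (simp add: d_def)
  with k(1) \<open>p k < N^2\<close> show ?thesis
    using that by blast
qed

theorem theorem2p3:
  assumes "\<forall>k::nat. k \<ge> 1 \<longrightarrow> (d k)^2 < 2 * p (k + 1)"
  shows "\<forall>N::nat. N \<ge> 1 \<longrightarrow> (\<exists>q::nat. prime q \<and> N^2 < q \<and> q < (N + 1)^2)"
proof (intro allI impI)
  fix N :: nat
  assume "N \<ge> 1"
  show "\<exists>q. prime q \<and> N^2 < q \<and> q < (N + 1)^2"
  proof (cases "N = 1")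
    case True
    then show ?thesis by (intro exI[of _ 2]) (simp add: power2_eq_square)
  next
    case False
    show ?thesis
    proof (rule ccontr)
      assume "\<nexists>q. prime q \<and> N^2 < q \<and> q < (N + 1)^2"
      moreover have "2 \<le> N"
        using \<open>N \<ge> 1\<close> \<open>N \<noteq> 1\<close> by simp
      ultimately obtain k where k: "1 \<le> k" "p k < N^2" "2 * N + 3 \<le> d k"
        using large_gap_across_prime_free_square_interval by blast
      have "d k^2 < 2 * (p k + d k)"
        using assms k(1) p_less_p_Suc[OF k(1)] by (simp add: d_def)
      then have "d k \<le> 2 * N + 2"
        using k(2) by (rule gap_bound_of_square_bound)
      with k(3) show False
        by simp
    qed
  qed
qed

end
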